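(* Let $$A=\begin{bmatrix}-1&0&1&0&0&0\\0&-1&0&0&0&0\\0&0&3&0&0&0\\0&0&1&4&0&0\\0&0&0&0&4&0\\0&0&0&0&0&4\end{bmatrix},\qquad B=\begin{bmatrix}0\\1\\1\\0\\0\\1\end{bmatrix}.$$ Then $r_c(A,B)=3$, whereas $\min\{|J|: J\subseteq\{1,\dots,6\},\ (A,[B,I_6(:,J)])\text{ controllable}\}=2$.
   Context: $r_c(A,B)=\min\{\|[\Delta A,\Delta B]\|_0: \Delta A\in\mathbb{R}^{n\times n},\Delta B\in\mathbb{R}^{n\times m},(A+\Delta A,B+\Delta B)\text{ controllable}\}$, where $\|M\|_0$ is the number of nonzero entries of $M$. $I_6(:,J)$ is the submatrix of the $6\times6$ identity formed by columns indexed by $J$. Controllability means $\operatorname{rank}[B,AB,\dots,A^{n-1}B]=n$. *)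

theory Defs
  imports "Jordan_Normal_Form.DL_Rank"
begin

text \<open>Matrices are Jordan_Normal_Form matrices (type real mat), indices start at 0.\<close>

definition kalman_mat :: "'a::comm_ring_1 mat \<Rightarrow> 'a mat \<Rightarrow> 'a mat" where
  "kalman_mat A B = mat_of_cols (dim_row A)
     (concat (map (\<lambda>k. cols ((A ^\<^sub>m k) * B)) [0..<dim_row A]))"

definition controllable :: "'a::field mat \<Rightarrow> 'a mat \<Rightarrow> bool" where
  "controllable A B \<longleftrightarrow> vec_space.rank (dim_row A) (kalman_mat A B) = dim_row A"

definition nnz :: "'a::zero mat \<Rightarrow> nat" where
  "nnz M = card {(i,j). i < dim_row M \<and> j < dim_col M \<and> M $$ (i,j) \<noteq> 0}"

text \<open>Sparsest controllability radius r_c(A,B); the zero-norm of [dA, dB] is nnz dA + nnz dB.\<close>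
definition rc :: "real mat \<Rightarrow> real mat \<Rightarrow> nat" where
  "rc A B = Inf {nnz dA + nnz dB | dA dB.
      dA \<in> carrier_mat (dim_row A) (dim_row A) \<and>
      dB \<in> carrier_mat (dim_row A) (dim_col B) \<and>
      controllable (A + dA) (B + dB)}"

definition aug_cols :: "real mat \<Rightarrow> nat set \<Rightarrow> real mat" where
  "aug_cols B J = mat_of_cols (dim_row B)
     (cols B @ map (\<lambda>j. unit_vec (dim_row B) j) (sorted_list_of_set J))"

definition A7 :: "real mat" where
  "A7 = mat_of_rows_list 6
     [[-1, 0, 1, 0, 0, 0],
      [ 0,-1, 0, 0, 0, 0],
      [ 0, 0, 3, 0, 0, 0],
      [ 0, 0, 1, 4, 0, 0],
      [ 0, 0, 0, 0, 4, 0],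
      [ 0, 0, 0, 0, 0, 4]]"

definition B7 :: "real mat" where
  "B7 = mat_of_rows_list 1 [[0],[1],[1],[0],[0],[1]]"

end

theory Submission
  imports Defs
begin

(* A left eigenvector w of A with w\<^sup>T B = 0 (an uncontrollable mode in the sense of the
   Popov-Belevitch-Hautus test) is orthogonal to every column A^k B of the Kalman matrix, so it
   certifies that (A, B) is not controllable, and it stays a certificate under perturbations of
   [A, B] confined to the rows where w vanishes.  For (A7, B7) the eigenvalue 4 has two such
   vectors with disjoint supports, e4 and (0,0,1,1,0,-1), and the eigenvalue -1 has
   (-4,-1,1,0,0,0).  Two nonzero entries of [dA, dB] lie in at most two rows; unless these are
   the rows 2 and 4, one of the three vectors survives, and for the rows 2 and 4 a certificate
   is rebuilt from the perturbed entries.  Likewise a single extra column e_j misses the support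
   of one of the two eigenvalue-4 certificates.  Three entries and the two columns e2, e4 do
   suffice, as shown by nonsingular Krylov matrices. *)

context vec_space
begin

lemma maximal_lin_indpt_cols_exists:
  obtains S where "maximal S (\<lambda>T. T \<subseteq> set (cols K) \<and> lin_indpt T)"
  using maximal_exists[of "\<lambda>T. T \<subseteq> set (cols K) \<and> lin_indpt T" "card (set (cols K))" "{}"]
  by (meson List.finite_set card_mono empty_iff empty_subsetI finite_lin_indpt2 rev_finite_subset)

lemma rank_le_dim:
  assumes K: "K \<in> carrier_mat n nc"
  shows "rank K \<le> n"
proof -
  obtain S where S: "maximal S (\<lambda>T. T \<subseteq> set (cols K) \<and> lin_indpt T)"
    using maximal_lin_indpt_cols_exists .
  then have "S \<subseteq> set (cols K)" "lin_indpt S" unfolding maximal_def by blast+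
  moreover have "set (cols K) \<subseteq> carrier_vec n" using K cols_dim by blast
  ultimately have "card S \<le> dim" using li_le_dim(2)[OF fin_dim] by (meson order_trans)
  then show ?thesis using rank_card_indpt[OF K S] dim_is_n by simp
qed

lemma rank_less_if_orthogonal_cols:
  assumes K: "K \<in> carrier_mat n nc" and w: "w \<in> carrier_vec n" "w \<noteq> 0\<^sub>v n"
    and orth: "\<And>v. v \<in> set (cols K) \<Longrightarrow> w \<bullet> v = 0"
  shows "rank K < n"
proof (rule ccontr)
  assume "\<not> rank K < n"
  then have "rank K = n" using rank_le_dim[OF K] by simp
  obtain S where S: "maximal S (\<lambda>T. T \<subseteq> set (cols K) \<and> lin_indpt T)"
    using maximal_lin_indpt_cols_exists .
  then have SK: "S \<subseteq> set (cols K)" and li: "lin_indpt S" unfolding maximal_def by blast+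
  have S_carrier: "S \<subseteq> carrier_vec n" using SK K cols_dim by blast
  have "finite S" using SK finite_subset by blast
  moreover have "card S = dim" using rank_card_indpt[OF K S] \<open>rank K = n\<close> dim_is_n by simp
  ultimately have "basis S" using dim_li_is_basis[OF fin_dim _ _ li] S_carrier by simp
  then have span_S: "span S = carrier_vec n" unfolding basis_def by simp
  have "w \<in> orthogonal_complement S"
    using w(1) orth SK unfolding orthogonal_complement_def by blast
  then have w_orth: "w \<in> orthogonal_complement (carrier_vec n)"
    using in_orthogonal_complement_span[OF S_carrier] span_S by simp
  have "w = 0\<^sub>v n"
  proof (rule eq_vecI)
    fix i assume i: "i < dim_vec (0\<^sub>v n)"
    then have "w $ i = w \<bullet> unit_vec n i" by (simp add: scalar_prod_right_unit)
    also have "\<dots> = 0" using w_orth unfolding orthogonal_complement_def by simp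
    finally show "w $ i = 0\<^sub>v n $ i" using i by simp
  qed (use w in simp)
  with w(2) show False ..
qed

lemma rank_eq_if_nonsingular_submatrix:
  assumes K: "K \<in> carrier_mat n nc" and C: "C \<in> carrier_mat n n"
    and sub: "set (cols C) \<subseteq> set (cols K)"
    and ker: "\<And>v. v \<in> carrier_vec n \<Longrightarrow> C *\<^sub>v v = 0\<^sub>v n \<Longrightarrow> v = 0\<^sub>v n"
  shows "rank K = n"
proof -
  have "det C \<noteq> 0" using det_0_iff_vec_prod_zero_field[OF C] ker by blast
  then have rank_C: "rank C = n" using det_rank_iff[OF C] by simp
  then have dist: "distinct (cols C)" using non_distinct_low_rank[OF C] by (metis less_irrefl)
  have "lin_indpt (set (cols C))" using full_rank_lin_indpt[OF C rank_C dist] .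
  moreover have "card (set (cols C)) = n" using distinct_card[OF dist] C by simp
  ultimately have "n \<le> rank K" using rank_ge_card_indpt[OF K sub] by metis
  then show ?thesis using rank_le_dim[OF K] by simp
qed

end

lemma cols_mult_mat:
  assumes "A \<in> carrier_mat n n" "B \<in> carrier_mat n m"
  shows "cols (A * B) = map (\<lambda>i. A *\<^sub>v col B i) [0..<m]"
  using assms by (intro nth_equalityI) (auto simp: col_mult2)

lemma set_cols_kalman_mat:
  assumes A: "A \<in> carrier_mat n n" and B: "B \<in> carrier_mat n m"
  shows "set (cols (kalman_mat A B)) = {A ^\<^sub>m k *\<^sub>v col B i | k i. k < n \<and> i < m}"
proof -
  define L where "L = concat (map (\<lambda>k. cols (A ^\<^sub>m k * B)) [0..<n])"
  have "set (cols (A ^\<^sub>m k * B)) = (\<lambda>i. A ^\<^sub>m k *\<^sub>v col B i) ` {0..<m}" for k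
    using cols_mult_mat[OF pow_carrier_mat[OF A] B] by simp
  then have set_L: "set L = {A ^\<^sub>m k *\<^sub>v col B i | k i. k < n \<and> i < m}"
    unfolding L_def by force
  moreover have "set L \<subseteq> carrier_vec n"
    unfolding set_L using mult_mat_vec_carrier[OF pow_carrier_mat[OF A] col_carrier_vec] B by fastforce
  moreover have "kalman_mat A B = mat_of_cols n L"
    unfolding kalman_mat_def L_def using A by (simp only: carrier_matD(1))
  ultimately show ?thesis by simp
qed

lemma dim_row_kalman_mat: "dim_row (kalman_mat A B) = dim_row A"
  unfolding kalman_mat_def by (rule mat_of_cols_carrier(2))

lemma kalman_mat_carrier:
  "A \<in> carrier_mat n n \<Longrightarrow> kalman_mat A B \<in> carrier_mat n (dim_col (kalman_mat A B))"
  using dim_row_kalman_mat[of A B] by (intro carrier_matI) auto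

lemma pow_mat_mult_vec_Suc:
  assumes "A \<in> carrier_mat n n" "v \<in> carrier_vec n"
  shows "A ^\<^sub>m Suc k *\<^sub>v v = A ^\<^sub>m k *\<^sub>v (A *\<^sub>v v)"
  unfolding pow_mat.simps(2) using pow_carrier_mat[OF assms(1)] assms by (rule assoc_mult_mat_vec)

definition uncontrollable_mode :: "'a::comm_ring_1 mat \<Rightarrow> 'a mat \<Rightarrow> 'a \<Rightarrow> 'a vec \<Rightarrow> bool" where
  "uncontrollable_mode A B l w \<longleftrightarrow>
     w \<in> carrier_vec (dim_row A) \<and> w \<noteq> 0\<^sub>v (dim_row A) \<and>
     transpose_mat A *\<^sub>v w = l \<cdot>\<^sub>v w \<and> transpose_mat B *\<^sub>v w = 0\<^sub>v (dim_col B)"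

lemma left_eigenvector_mult_pow:
  fixes A :: "'a::comm_ring_1 mat"
  assumes A: "A \<in> carrier_mat n n" and w: "w \<in> carrier_vec n"
    and eig: "transpose_mat A *\<^sub>v w = l \<cdot>\<^sub>v w" and x: "x \<in> carrier_vec n"
  shows "w \<bullet> (A ^\<^sub>m k *\<^sub>v x) = l ^ k * (w \<bullet> x)"
  using x
proof (induction k arbitrary: x)
  case 0
  then show ?case using A by (simp add: carrier_matD(1))
next
  case (Suc k)
  have "w \<bullet> (A ^\<^sub>m Suc k *\<^sub>v x) = w \<bullet> (A ^\<^sub>m k *\<^sub>v (A *\<^sub>v x))"
    using pow_mat_mult_vec_Suc[OF A Suc.prems] by simp
  also have "\<dots> = l ^ k * (w \<bullet> (A *\<^sub>v x))"
    using Suc.IH[OF mult_mat_vec_carrier[OF A Suc.prems]] .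
  also have "w \<bullet> (A *\<^sub>v x) = (transpose_mat A *\<^sub>v w) \<bullet> x"
    using transpose_vec_mult_scalar[OF A Suc.prems w] by simp
  also have "\<dots> = l * (w \<bullet> x)"
    unfolding eig using w Suc.prems by (rule smult_scalar_prod_distrib)
  finally show ?case by (simp add: ac_simps)
qed

theorem not_controllable_if_uncontrollable_mode:
  fixes A :: "'a::field mat"
  assumes A: "A \<in> carrier_mat n n" and B: "B \<in> carrier_mat n m"
    and mode: "uncontrollable_mode A B l w"
  shows "\<not> controllable A B"
proof -
  have w: "w \<in> carrier_vec n" "w \<noteq> 0\<^sub>v n" and eig: "transpose_mat A *\<^sub>v w = l \<cdot>\<^sub>v w"
    and orth: "transpose_mat B *\<^sub>v w = 0\<^sub>v m"
    using mode A B unfolding uncontrollable_mode_def by auto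
  have orth_kalman: "w \<bullet> v = 0" if "v \<in> set (cols (kalman_mat A B))" for v
  proof -
    have "v \<in> {A ^\<^sub>m k *\<^sub>v col B i | k i. k < n \<and> i < m}"
      using that unfolding set_cols_kalman_mat[OF A B] .
    then obtain k i where v: "v = A ^\<^sub>m k *\<^sub>v col B i" and i: "i < m"
      by blast
    have col_B: "col B i \<in> carrier_vec n" using B i by simp
    have "w \<bullet> col B i = col B i \<bullet> w" using w(1) col_B by (rule comm_scalar_prod)
    also have "\<dots> = (transpose_mat B *\<^sub>v w) $ i" using B i by simp
    also have "\<dots> = 0" using orth i by simp
    finally show ?thesis
      using left_eigenvector_mult_pow[OF A w(1) eig col_B, of k] v by simp
  qed
  have "vec_space.rank n (kalman_mat A B) < n"
    by (rule vec_space.rank_less_if_orthogonal_cols[OF kalman_mat_carrier[OF A] w orth_kalman])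
  then show ?thesis unfolding controllable_def using A by simp
qed

theorem controllable_if_nonsingular_krylov:
  fixes A :: "'a::field mat"
  assumes A: "A \<in> carrier_mat n n" and B: "B \<in> carrier_mat n m"
    and ps: "length ps = n" "\<forall>(k, i) \<in> set ps. k < n \<and> i < m"
    and ker: "\<And>v. v \<in> carrier_vec n \<Longrightarrow>
      mat_of_cols n (map (\<lambda>(k, i). A ^\<^sub>m k *\<^sub>v col B i) ps) *\<^sub>v v = 0\<^sub>v n \<Longrightarrow> v = 0\<^sub>v n"
  shows "controllable A B"
proof -
  define C where "C = mat_of_cols n (map (\<lambda>(k, i). A ^\<^sub>m k *\<^sub>v col B i) ps)"
  have C: "C \<in> carrier_mat n n" unfolding C_def using mat_of_cols_carrier(1) ps(1) by (metis length_map)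
  have "set (map (\<lambda>(k, i). A ^\<^sub>m k *\<^sub>v col B i) ps) \<subseteq> carrier_vec n"
    using ps(2) A B by (auto intro!: mult_mat_vec_carrier[of _ n n])
  moreover have "set (map (\<lambda>(k, i). A ^\<^sub>m k *\<^sub>v col B i) ps) \<subseteq> set (cols (kalman_mat A B))"
    using ps(2) unfolding set_cols_kalman_mat[OF A B] by fastforce
  ultimately have "set (cols C) \<subseteq> set (cols (kalman_mat A B))" unfolding C_def by simp
  then have "vec_space.rank n (kalman_mat A B) = n"
    using vec_space.rank_eq_if_nonsingular_submatrix[OF kalman_mat_carrier[OF A] C] ker
    unfolding C_def by blast
  then show ?thesis unfolding controllable_def using A by simp
qed

definition nonzero_rows :: "'a::zero mat \<Rightarrow> nat set" where
  "nonzero_rows M = {i. i < dim_row M \<and> (\<exists>j<dim_col M. M $$ (i, j) \<noteq> 0)}"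

lemma transpose_mult_vec_nonzero_rows:
  assumes M: "M \<in> carrier_mat n k" and w: "w \<in> carrier_vec n"
    and R: "nonzero_rows M \<subseteq> R" "R \<subseteq> {0..<n}"
  shows "transpose_mat M *\<^sub>v w = vec k (\<lambda>j. \<Sum>i\<in>R. M $$ (i, j) * w $ i)"
proof (rule eq_vecI)
  fix j assume "j < dim_vec (vec k (\<lambda>j. \<Sum>i\<in>R. M $$ (i, j) * w $ i))"
  then have j: "j < k" by simp
  have "(transpose_mat M *\<^sub>v w) $ j = (\<Sum>i\<in>{0..<n}. M $$ (i, j) * w $ i)"
    using M w j by (simp add: scalar_prod_def)
  also have "\<dots> = (\<Sum>i\<in>R. M $$ (i, j) * w $ i)"
  proof (rule sum.mono_neutral_right)
    show "\<forall>i\<in>{0..<n} - R. M $$ (i, j) * w $ i = 0"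
      using R(1) M j unfolding nonzero_rows_def by (fastforce simp: subset_iff)
  qed (use R(2) in auto)
  finally show "(transpose_mat M *\<^sub>v w) $ j = vec k (\<lambda>j. \<Sum>i\<in>R. M $$ (i, j) * w $ i) $ j"
    using j by simp
qed (use M in simp)

lemma transpose_mult_vec_eq_zero:
  assumes M: "M \<in> carrier_mat n k" and w: "w \<in> carrier_vec n"
    and vanish: "\<forall>i\<in>nonzero_rows M. w $ i = 0"
  shows "transpose_mat M *\<^sub>v w = 0\<^sub>v k"
proof -
  have "nonzero_rows M \<subseteq> {0..<n}" using M unfolding nonzero_rows_def by auto
  then show ?thesis
    using transpose_mult_vec_nonzero_rows[OF M w order.refl] vanish by (auto intro!: eq_vecI)
qed

lemma uncontrollable_mode_perturb:
  fixes A :: "'a::comm_ring_1 mat"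
  assumes A: "A \<in> carrier_mat n n" and B: "B \<in> carrier_mat n m"
    and dA: "dA \<in> carrier_mat n n" and dB: "dB \<in> carrier_mat n m"
    and mode: "uncontrollable_mode A B l w"
    and vanish: "\<forall>i \<in> nonzero_rows dA \<union> nonzero_rows dB. w $ i = 0"
  shows "uncontrollable_mode (A + dA) (B + dB) l w"
proof -
  have w: "w \<in> carrier_vec n" using mode A unfolding uncontrollable_mode_def by simp
  have "transpose_mat dA *\<^sub>v w = 0\<^sub>v n" "transpose_mat dB *\<^sub>v w = 0\<^sub>v m"
    using transpose_mult_vec_eq_zero[OF dA w] transpose_mult_vec_eq_zero[OF dB w] vanish by blast+
  then show ?thesis
    using mode A B dA dB w unfolding uncontrollable_mode_def
    by (simp add: transpose_add add_mult_distrib_mat_vec[of _ n n] add_mult_distrib_mat_vec[of _ m n])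
qed

lemma uncontrollable_mode_aug_cols:
  fixes A B :: "real mat"
  assumes A: "A \<in> carrier_mat n n" and B: "B \<in> carrier_mat n m"
    and mode: "uncontrollable_mode A B l w"
    and J: "J \<subseteq> {0..<n}" and vanish: "\<forall>j\<in>J. w $ j = 0"
  shows "uncontrollable_mode A (aug_cols B J) l w"
proof -
  have w: "w \<in> carrier_vec n" and orth: "transpose_mat B *\<^sub>v w = 0\<^sub>v m"
    using mode A B unfolding uncontrollable_mode_def by auto
  define vs where "vs = cols B @ map (unit_vec n) (sorted_list_of_set J)"
  have vs_carrier: "set vs \<subseteq> carrier_vec n" using B cols_dim[of B] unfolding vs_def by auto
  have orth_vs: "v \<bullet> w = 0" if v: "v \<in> set vs" for v
  proof -
    consider i where "i < m" "v = col B i" | j where "j \<in> J" "v = unit_vec n j"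
      using v B J finite_subset[OF J] unfolding vs_def by (auto simp: cols_def)
    then show ?thesis
    proof cases
      case 1
      then show ?thesis
        using orth B
        by (metis index_mult_mat_vec index_transpose_mat index_zero_vec carrier_matD row_transpose)
    next
      case 2
      then show ?thesis using w vanish J by (auto simp: comm_scalar_prod[of _ n] scalar_prod_right_unit)
    qed
  qed
  have aug: "aug_cols B J = mat_of_cols n vs"
    unfolding aug_cols_def vs_def using B by simp
  have "transpose_mat (mat_of_cols n vs) *\<^sub>v w = 0\<^sub>v (length vs)"
    unfolding transpose_mat_of_cols
  proof (rule eq_vecI)
    fix i assume "i < dim_vec (0\<^sub>v (length vs) :: real vec)"
    then have i: "i < length vs" and vs_i: "vs ! i \<in> set vs" by simp_all
    have "vs ! i \<in> carrier_vec n" using vs_carrier vs_i by (rule subsetD)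
    then show "(mat_of_rows n vs *\<^sub>v w) $ i = 0\<^sub>v (length vs) $ i"
      using i orth_vs[OF vs_i] by simp
  qed simp
  then show ?thesis
    using mode unfolding aug uncontrollable_mode_def by simp
qed

lemma nnz_zero_mat: "nnz (0\<^sub>m n m :: 'a::zero mat) = 0"
proof -
  have "{(i, j). i < dim_row (0\<^sub>m n m :: 'a mat) \<and> j < dim_col (0\<^sub>m n m :: 'a mat) \<and>
      (0\<^sub>m n m :: 'a mat) $$ (i, j) \<noteq> 0} = {}"
    by auto
  then show ?thesis unfolding nnz_def by (metis card.empty)
qed

lemma subset_doubleton_if_card_le_2:
  assumes "finite P" "card P \<le> 2"
  obtains p q where "P \<subseteq> {p, q}"
proof (cases "P = {}")
  case False
  then obtain p where p: "p \<in> P" by blast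
  then have "card (P - {p}) \<le> 1" using assms by (simp add: card_Diff_singleton)
  then have "\<forall>x\<in>P - {p}. \<forall>y\<in>P - {p}. x = y" using assms(1) by (simp add: card_le_Suc0_iff_eq)
  then show ?thesis using that p by blast
qed (use that in blast)

(* (i, k + j) is the position of the entry (i, j) of dB in the block matrix [dA, dB]. *)
lemma support_of_sparse_pair:
  assumes dA: "dA \<in> carrier_mat n k" and dB: "dB \<in> carrier_mat n m"
    and sparse: "nnz dA + nnz dB \<le> 2"
  obtains p q where "\<forall>i<n. \<forall>j<k. dA $$ (i, j) \<noteq> 0 \<longrightarrow> (i, j) \<in> {p, q}"
    and "\<forall>i<n. \<forall>j<m. dB $$ (i, j) \<noteq> 0 \<longrightarrow> (i, k + j) \<in> {p, q}"
proof -
  define PA where "PA = {(i, j). i < n \<and> j < k \<and> dA $$ (i, j) \<noteq> 0}"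
  define PB where "PB = {(i, j). i < n \<and> j < m \<and> dB $$ (i, j) \<noteq> 0}"
  define P where "P = PA \<union> (\<lambda>(i, j). (i, k + j)) ` PB"
  have fin: "finite PA" "finite PB"
    unfolding PA_def PB_def by (auto intro: finite_subset[of _ "{0..<n} \<times> {0..<_}"])
  have "card P \<le> card PA + card PB"
    unfolding P_def using card_Un_le card_image_le[OF fin(2)] by (meson add_left_mono order_trans)
  also have "\<dots> \<le> 2" using sparse dA dB unfolding nnz_def PA_def PB_def by simp
  finally have "card P \<le> 2" .
  moreover have "finite P" unfolding P_def using fin by simp
  ultimately obtain p q where pq: "P \<subseteq> {p, q}" using subset_doubleton_if_card_le_2 by blast
  show ?thesis
  proof (rule that)
    show "\<forall>i<n. \<forall>j<k. dA $$ (i, j) \<noteq> 0 \<longrightarrow> (i, j) \<in> {p, q}"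
      using pq unfolding P_def PA_def by blast
    show "\<forall>i<n. \<forall>j<m. dB $$ (i, j) \<noteq> 0 \<longrightarrow> (i, k + j) \<in> {p, q}"
      using pq unfolding P_def PB_def by force
  qed
qed

(* Concrete vectors are kept as lists, so that the computation lemmas below apply. *)
declare vec_of_list_Cons [simp del]

lemma vec_of_list_carrier: "length xs = n \<Longrightarrow> vec_of_list xs \<in> carrier_vec n"
  by (rule carrier_vecI) simp

lemma vec_of_list_eq_zero_iff: "vec_of_list xs = 0\<^sub>v n \<longleftrightarrow> length xs = n \<and> (\<forall>x\<in>set xs. x = 0)"
  by (force simp: vec_eq_iff vec_of_list_index in_set_conv_nth)

lemma smult_vec_of_list: "c \<cdot>\<^sub>v vec_of_list xs = vec_of_list (map ((*) c) xs)"
  by (rule eq_vecI) (simp_all add: vec_of_list_index)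

lemma less_6_cases: "i < (6::nat) \<Longrightarrow> i = 0 \<or> i = 1 \<or> i = 2 \<or> i = 3 \<or> i = 4 \<or> i = 5"
  by linarith

lemma sum_lessThan_6: "(\<Sum>i<6::nat. f i) = f 0 + f 1 + f 2 + f 3 + f 4 + f 5"
  by (simp add: numeral_eq_Suc ac_simps)

lemmas vec6_simps = scalar_prod_def atLeast0LessThan sum_lessThan_6 vec_of_list_index

lemma vec_of_list_6I:
  assumes "dim_vec v = 6"
    and "v $ 0 = x0" "v $ 1 = x1" "v $ 2 = x2" "v $ 3 = x3" "v $ 4 = x4" "v $ 5 = x5"
  shows "v = vec_of_list [x0, x1, x2, x3, x4, x5]"
  using assms by (intro eq_vecI) (auto simp: vec_of_list_index less_Suc_eq numeral_eq_Suc)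

lemma vec_of_list_6_cases:
  assumes "v \<in> carrier_vec 6"
  obtains x0 x1 x2 x3 x4 x5 where "v = vec_of_list [x0, x1, x2, x3, x4, x5]"
proof
  show "v = vec_of_list [v $ 0, v $ 1, v $ 2, v $ 3, v $ 4, v $ 5]"
    using assms by (intro eq_vecI) (auto simp: vec_of_list_index less_Suc_eq numeral_eq_Suc)
qed

lemma vec_6_eq_zero_iff:
  "dim_vec v = 6 \<Longrightarrow>
    v = 0\<^sub>v 6 \<longleftrightarrow> v $ 0 = 0 \<and> v $ 1 = 0 \<and> v $ 2 = 0 \<and> v $ 3 = 0 \<and> v $ 4 = 0 \<and> v $ 5 = 0"
  by (auto simp: vec_eq_iff dest!: less_6_cases)

lemma A7_carrier: "A7 \<in> carrier_mat 6 6"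
  by (simp add: A7_def mat_of_rows_list_def numeral_eq_Suc)

lemma B7_carrier: "B7 \<in> carrier_mat 6 1"
  by (simp add: B7_def mat_of_rows_list_def numeral_eq_Suc)

lemma A7_index:
  "i < 6 \<Longrightarrow> j < 6 \<Longrightarrow> A7 $$ (i, j) =
    [[-1, 0, 1, 0, 0, 0], [0, -1, 0, 0, 0, 0], [0, 0, 3, 0, 0, 0],
     [0, 0, 1, 4, 0, 0], [0, 0, 0, 0, 4, 0], [0, 0, 0, 0, 0, 4]] ! i ! j"
  by (simp add: A7_def mat_of_rows_list_def)

lemma B7_index: "i < 6 \<Longrightarrow> B7 $$ (i, 0) = [0, 1, 1, 0, 0, 1] ! i"
  using less_6_cases[of i] by (auto simp: B7_def mat_of_rows_list_def)

lemma col_B7: "col B7 0 = vec_of_list [0, 1, 1, 0, 0, 1]"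
  using carrier_matD[OF B7_carrier] by (intro vec_of_list_6I) (simp_all add: B7_index)

lemma A7_mult_vec:
  "A7 *\<^sub>v vec_of_list [x0, x1, x2, x3, x4, x5] =
     vec_of_list [x2 - x0, - x1, 3 * x2, x2 + 4 * x3, 4 * x4, 4 * x5]"
  using carrier_matD[OF A7_carrier] by (intro vec_of_list_6I) (simp_all add: A7_index vec6_simps)

lemma transpose_A7_mult_vec:
  "transpose_mat A7 *\<^sub>v vec_of_list [x0, x1, x2, x3, x4, x5] =
     vec_of_list [- x0, - x1, x0 + 3 * x2 + x3, 4 * x3, 4 * x4, 4 * x5]"
  using carrier_matD[OF A7_carrier] by (intro vec_of_list_6I) (simp_all add: A7_index vec6_simps)

lemma transpose_B7_mult_vec:
  "transpose_mat B7 *\<^sub>v vec_of_list [x0, x1, x2, x3, x4, x5] = vec_of_list [x1 + x2 + x5]"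
  using carrier_matD[OF B7_carrier]
  by (intro eq_vecI) (simp_all add: B7_index vec6_simps vec_of_list_Cons)

lemma uncontrollable_modes_A7_B7:
  "uncontrollable_mode A7 B7 4 (vec_of_list [0, 0, 0, 0, 1, 0])"
  "uncontrollable_mode A7 B7 4 (vec_of_list [0, 0, 1, 1, 0, -1])"
  "uncontrollable_mode A7 B7 (-1) (vec_of_list [-4, -1, 1, 0, 0, 0])"
  using carrier_matD[OF A7_carrier] carrier_matD[OF B7_carrier]
  by (simp_all add: uncontrollable_mode_def transpose_A7_mult_vec transpose_B7_mult_vec
      smult_vec_of_list vec_of_list_carrier vec_of_list_eq_zero_iff)

lemma transpose_mult_vec_rows_2_4:
  assumes M: "M \<in> carrier_mat 6 k" and rows: "nonzero_rows M \<subseteq> {2, 4}"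
  shows "transpose_mat M *\<^sub>v vec_of_list [x0, x1, x2, x3, x4, x5] =
    vec k (\<lambda>j. M $$ (2, j) * x2 + M $$ (4, j) * x4)"
  using transpose_mult_vec_nonzero_rows[OF M vec_of_list_carrier rows] by (simp add: vec_of_list_index)

lemma rows_2_4_perturbation_not_controllable_4:
  fixes dA dB :: "real mat"
  assumes dA: "dA \<in> carrier_mat 6 6" and dB: "dB \<in> carrier_mat 6 1"
    and rows: "nonzero_rows dA \<union> nonzero_rows dB \<subseteq> {2, 4}"
    and st: "(s, t) \<noteq> (0, 0)" and block: "\<forall>j\<in>{3, 4, 5}. s * dA $$ (2, j) + t * dA $$ (4, j) = 0"
  shows "\<not> controllable (A7 + dA) (B7 + dB)"
proof -
  (* w2 = s and w4 = t are free; w0, w1, w3, w5 are solved from the columns 0, 1, 2 of A7 - 4I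
     and from B7, where each of them has a nonzero coefficient.  The columns 3, 4, 5 of A7 - 4I
     vanish, which leaves exactly the condition block. *)
  define a where "a = (s * dA $$ (2, 0) + t * dA $$ (4, 0)) / 5"
  define b where "b = (s * dA $$ (2, 1) + t * dA $$ (4, 1)) / 5"
  define w where "w = vec_of_list [a, b, s, s - a - s * dA $$ (2, 2) - t * dA $$ (4, 2), t,
    - b - s - s * dB $$ (2, 0) - t * dB $$ (4, 0)]"
  have "transpose_mat (A7 + dA) *\<^sub>v w = transpose_mat A7 *\<^sub>v w + transpose_mat dA *\<^sub>v w"
    using A7_carrier dA by (simp add: w_def vec_of_list_carrier transpose_add add_mult_distrib_mat_vec[of _ 6 6])
  also have "\<dots> = 4 \<cdot>\<^sub>v w"
    using rows block unfolding w_def smult_vec_of_list list.map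
    by (intro vec_of_list_6I)
      (simp_all add: transpose_A7_mult_vec transpose_mult_vec_rows_2_4[OF dA] a_def b_def field_simps
        vec_of_list_index)
  finally have eig: "transpose_mat (A7 + dA) *\<^sub>v w = 4 \<cdot>\<^sub>v w" .
  have "transpose_mat (B7 + dB) *\<^sub>v w = transpose_mat B7 *\<^sub>v w + transpose_mat dB *\<^sub>v w"
    using B7_carrier dB by (simp add: w_def vec_of_list_carrier transpose_add add_mult_distrib_mat_vec[of _ 1 6])
  also have "\<dots> = 0\<^sub>v 1"
    using rows unfolding w_def
    by (intro eq_vecI) (simp_all add: transpose_B7_mult_vec transpose_mult_vec_rows_2_4[OF dB] b_def
        vec_of_list_index)
  finally have orth: "transpose_mat (B7 + dB) *\<^sub>v w = 0\<^sub>v 1" .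
  have "w \<noteq> 0\<^sub>v 6" using st unfolding w_def by (auto simp: vec_of_list_eq_zero_iff)
  then have "uncontrollable_mode (A7 + dA) (B7 + dB) 4 w"
    using eig orth dA dB unfolding uncontrollable_mode_def by (simp add: w_def vec_of_list_carrier)
  then show ?thesis
    using A7_carrier B7_carrier dA dB by (intro not_controllable_if_uncontrollable_mode[of _ 6 _ 1]) auto
qed

lemma rows_2_4_perturbation_not_controllable_minus_1:
  fixes dA dB :: "real mat"
  assumes dA: "dA \<in> carrier_mat 6 6" and dB: "dB \<in> carrier_mat 6 1"
    and rows: "nonzero_rows dA \<union> nonzero_rows dB \<subseteq> {2, 4}"
    and row_2: "dA $$ (2, 0) = 0" "dA $$ (2, 1) = 0"
    and row_4: "dA $$ (2, 4) = 0 \<or> dA $$ (4, 0) = 0 \<and> dA $$ (4, 1) = 0 \<and> dA $$ (4, 4) = 0"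
  shows "\<not> controllable (A7 + dA) (B7 + dB)"
proof -
  (* Now w2 = 1, the column 4 of A7 + I forces w4 = e, and w3, w5, w0, w1 are solved from the
     columns 3, 5, 2 of A7 + I and from B7.  The columns 0 and 1 of A7 + I vanish; this is where
     the hypotheses on the rows 2 and 4 enter. *)
  define e where "e = - dA $$ (2, 4) / 5"
  define d where "d = - (dA $$ (2, 3) + e * dA $$ (4, 3)) / 5"
  define f where "f = - (dA $$ (2, 5) + e * dA $$ (4, 5)) / 5"
  define w where "w = vec_of_list [- 4 - d - dA $$ (2, 2) - e * dA $$ (4, 2),
    - 1 - f - dB $$ (2, 0) - e * dB $$ (4, 0), 1, d, e, f]"
  have e_row_4: "e * dA $$ (4, 0) = 0" "e * dA $$ (4, 1) = 0" "e * dA $$ (4, 4) = 0"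
    using row_4 unfolding e_def by auto
  have "transpose_mat (A7 + dA) *\<^sub>v w = transpose_mat A7 *\<^sub>v w + transpose_mat dA *\<^sub>v w"
    using A7_carrier dA by (simp add: w_def vec_of_list_carrier transpose_add add_mult_distrib_mat_vec[of _ 6 6])
  also have "\<dots> = (- 1) \<cdot>\<^sub>v w"
    using rows row_2 e_row_4 unfolding w_def smult_vec_of_list list.map
    by (intro vec_of_list_6I)
      (simp_all add: transpose_A7_mult_vec transpose_mult_vec_rows_2_4[OF dA] d_def e_def f_def
        field_simps vec_of_list_index)
  finally have eig: "transpose_mat (A7 + dA) *\<^sub>v w = (- 1) \<cdot>\<^sub>v w" .
  have "transpose_mat (B7 + dB) *\<^sub>v w = transpose_mat B7 *\<^sub>v w + transpose_mat dB *\<^sub>v w"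
    using B7_carrier dB by (simp add: w_def vec_of_list_carrier transpose_add add_mult_distrib_mat_vec[of _ 1 6])
  also have "\<dots> = 0\<^sub>v 1"
    using rows unfolding w_def
    by (intro eq_vecI) (simp_all add: transpose_B7_mult_vec transpose_mult_vec_rows_2_4[OF dB]
        vec_of_list_index)
  finally have orth: "transpose_mat (B7 + dB) *\<^sub>v w = 0\<^sub>v 1" .
  have "uncontrollable_mode (A7 + dA) (B7 + dB) (- 1) w"
    using eig orth dA dB unfolding uncontrollable_mode_def
    by (simp add: w_def vec_of_list_carrier vec_of_list_eq_zero_iff)
  then show ?thesis
    using A7_carrier B7_carrier dA dB by (intro not_controllable_if_uncontrollable_mode[of _ 6 _ 1]) auto
qed

lemma rows_2_4_single_entries_not_controllable:
  fixes dA dB :: "real mat"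
  assumes dA: "dA \<in> carrier_mat 6 6" and dB: "dB \<in> carrier_mat 6 1"
    and supp_A: "\<forall>i<6. \<forall>j<6. dA $$ (i, j) \<noteq> 0 \<longrightarrow> (i, j) \<in> {(2, k), (4, l)}"
    and supp_B: "\<forall>i<6. dB $$ (i, 0) \<noteq> 0 \<longrightarrow> (i, 6) \<in> {(2, k), (4, l)}"
  shows "\<not> controllable (A7 + dA) (B7 + dB)"
proof -
  have rows: "nonzero_rows dA \<union> nonzero_rows dB \<subseteq> {2, 4}"
    using supp_A supp_B dA dB unfolding nonzero_rows_def by fastforce
  have row_2: "dA $$ (2, j) = 0" if "j < 6" "j \<noteq> k" for j using supp_A[rule_format, of 2 j] that by auto
  have row_4: "dA $$ (4, j) = 0" if "j < 6" "j \<noteq> l" for j using supp_A[rule_format, of 4 j] that by auto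
  (* The block of dA in the rows 2, 4 and the columns 3, 4, 5 is singular unless k and l are
     distinct elements of {3, 4, 5}. *)
  note at_4 = rows_2_4_perturbation_not_controllable_4[OF dA dB rows]
  note at_minus_1 = rows_2_4_perturbation_not_controllable_minus_1[OF dA dB rows]
  consider "k \<notin> {3, 4, 5}" | "l \<notin> {3, 4, 5}" | "k = l" | "k \<in> {3, 5}" | "k = 4" "l \<in> {3, 5}"
    by auto
  then show ?thesis
  proof cases
    case 1
    then show ?thesis using row_2 by (intro at_4[of 1 0]) auto
  next
    case 2
    then show ?thesis using row_4 by (intro at_4[of 0 1]) auto
  next
    case 3
    show ?thesis
    proof (cases "dA $$ (2, k) = 0")
      case True
      then have "dA $$ (2, j) = 0" if "j < 6" for j using row_2 that by (cases "j = k") auto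
      then show ?thesis by (intro at_4[of 1 0]) auto
    next
      case False
      have "dA $$ (4, k) * dA $$ (2, j) - dA $$ (2, k) * dA $$ (4, j) = 0" if "j < 6" for j
        using row_2 row_4 3 that by (cases "j = k") auto
      then show ?thesis using False by (intro at_4[of "dA $$ (4, k)" "- dA $$ (2, k)"]) auto
    qed
  next
    case 4
    then show ?thesis using row_2 by (intro at_minus_1) auto
  next
    case 5
    then show ?thesis using row_2 row_4 by (intro at_minus_1) auto
  qed
qed

lemma sparse_perturbation_not_controllable:
  fixes dA dB :: "real mat"
  assumes dA: "dA \<in> carrier_mat 6 6" and dB: "dB \<in> carrier_mat 6 1"
    and sparse: "nnz dA + nnz dB \<le> 2"
  shows "\<not> controllable (A7 + dA) (B7 + dB)"
proof -
  obtain r1 c1 r2 c2 where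
    supp_A: "\<forall>i<6. \<forall>j<6. dA $$ (i, j) \<noteq> 0 \<longrightarrow> (i, j) \<in> {(r1, c1), (r2, c2)}" and
    supp_B: "\<forall>i<6. \<forall>j<1. dB $$ (i, j) \<noteq> 0 \<longrightarrow> (i, 6 + j) \<in> {(r1, c1), (r2, c2)}"
    using support_of_sparse_pair[OF dA dB sparse] by (metis surj_pair)
  have rows: "nonzero_rows dA \<union> nonzero_rows dB \<subseteq> {r1, r2} \<inter> {0..<6}"
    using supp_A supp_B dA dB unfolding nonzero_rows_def by fastforce
  have mode_survives: "\<not> controllable (A7 + dA) (B7 + dB)"
    if mode: "uncontrollable_mode A7 B7 l w" and vanish: "\<forall>i\<in>{r1, r2} \<inter> {0..<6}. w $ i = 0" for l w
  proof -
    have "uncontrollable_mode (A7 + dA) (B7 + dB) l w"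
      using uncontrollable_mode_perturb[OF A7_carrier B7_carrier dA dB mode] rows vanish by blast
    then show ?thesis
      using A7_carrier B7_carrier dA dB by (intro not_controllable_if_uncontrollable_mode[of _ 6 _ 1]) auto
  qed
  let ?R = "{r1, r2} \<inter> {0..<6}"
  have "(\<forall>i\<in>?R. vec_of_list [0, 0, 0, 0, 1, 0] $ i = (0::real)) \<or>
      (\<forall>i\<in>?R. vec_of_list [0, 0, 1, 1, 0, -1] $ i = (0::real)) \<or>
      (\<forall>i\<in>?R. vec_of_list [-4, -1, 1, 0, 0, 0] $ i = (0::real)) \<or>
      r1 = 2 \<and> r2 = 4 \<or> r1 = 4 \<and> r2 = 2"
    by (cases "r1 < 6"; cases "r2 < 6") (auto simp: vec_of_list_index dest!: less_6_cases)
  then show ?thesis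
    using mode_survives[OF uncontrollable_modes_A7_B7(1)] mode_survives[OF uncontrollable_modes_A7_B7(2)]
      mode_survives[OF uncontrollable_modes_A7_B7(3)]
      rows_2_4_single_entries_not_controllable[OF dA dB, of c1 c2]
      rows_2_4_single_entries_not_controllable[OF dA dB, of c2 c1] supp_A supp_B
    by (elim disjE) auto
qed

definition dA0 :: "real mat" where
  "dA0 = mat 6 6 (\<lambda>ij. if ij \<in> {(0, 0), (2, 3), (4, 5)} then 1 else 0)"

lemma dA0_carrier: "dA0 \<in> carrier_mat 6 6"
  by (simp add: dA0_def)

lemma nnz_dA0: "nnz dA0 = 3"
proof -
  have "{(i, j). i < dim_row dA0 \<and> j < dim_col dA0 \<and> dA0 $$ (i, j) \<noteq> 0} = {(0, 0), (2, 3), (4, 5)}"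
    unfolding dA0_def by (auto split: if_splits)
  then show ?thesis unfolding nnz_def by simp
qed

lemma A7_dA0_mult_vec:
  "(A7 + dA0) *\<^sub>v vec_of_list [x0, x1, x2, x3, x4, x5] =
     vec_of_list [x2, - x1, 3 * x2 + x3, x2 + 4 * x3, 4 * x4 + x5, 4 * x5]"
  using carrier_matD[OF A7_carrier] carrier_matD[OF dA0_carrier]
  by (intro vec_of_list_6I) (simp_all add: A7_index dA0_def vec6_simps)

lemma krylov_A7_dA0:
  "map (\<lambda>(k, i). (A7 + dA0) ^\<^sub>m k *\<^sub>v col B7 i) [(0, 0), (1, 0), (2, 0), (3, 0), (4, 0), (5, 0)] =
     [vec_of_list [0, 1, 1, 0, 0, 1], vec_of_list [1, -1, 3, 1, 1, 4],
      vec_of_list [3, 1, 10, 7, 8, 16], vec_of_list [10, -1, 37, 38, 48, 64],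
      vec_of_list [37, 1, 149, 189, 256, 256], vec_of_list [149, -1, 636, 905, 1280, 1024]]"
proof -
  have A: "A7 + dA0 \<in> carrier_mat 6 6" using A7_carrier dA0_carrier by simp
  have "(A7 + dA0) ^\<^sub>m 0 *\<^sub>v v = v" if "v \<in> carrier_vec 6" for v
    using that by (simp add: carrier_matD(1)[OF dA0_carrier])
  with A show ?thesis
    by (simp add: eval_nat_numeral pow_mat_mult_vec_Suc vec_of_list_carrier A7_dA0_mult_vec col_B7
        del: pow_mat.simps)
qed

lemma krylov_A7_dA0_nonsingular:
  fixes v :: "real vec"
  assumes v: "v \<in> carrier_vec 6"
    and ker: "mat_of_cols 6 [vec_of_list [0, 1, 1, 0, 0, 1], vec_of_list [1, -1, 3, 1, 1, 4],
      vec_of_list [3, 1, 10, 7, 8, 16], vec_of_list [10, -1, 37, 38, 48, 64],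
      vec_of_list [37, 1, 149, 189, 256, 256], vec_of_list [149, -1, 636, 905, 1280, 1024]] *\<^sub>v v = 0\<^sub>v 6"
  shows "v = 0\<^sub>v 6"
proof -
  obtain x0 x1 x2 x3 x4 x5 where v_eq: "v = vec_of_list [x0, x1, x2, x3, x4, x5]"
    using v by (rule vec_of_list_6_cases)
  from ker have "x0 = 0 \<and> x1 = 0 \<and> x2 = 0 \<and> x3 = 0 \<and> x4 = 0 \<and> x5 = 0"
    unfolding v_eq by (simp add: vec_6_eq_zero_iff mat_of_cols_def vec6_simps)
  then show ?thesis unfolding v_eq by (simp add: vec_of_list_eq_zero_iff)
qed

lemma controllable_A7_dA0: "controllable (A7 + dA0) B7"
proof (rule controllable_if_nonsingular_krylov[OF _ B7_carrier])
  show "A7 + dA0 \<in> carrier_mat 6 6" using A7_carrier dA0_carrier by simp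
  fix v :: "real vec"
  assume "v \<in> carrier_vec 6" "mat_of_cols 6 (map (\<lambda>(k, i). (A7 + dA0) ^\<^sub>m k *\<^sub>v col B7 i)
    [(0, 0), (1, 0), (2, 0), (3, 0), (4, 0), (5, 0)]) *\<^sub>v v = 0\<^sub>v 6"
  then show "v = 0\<^sub>v 6" unfolding krylov_A7_dA0 by (rule krylov_A7_dA0_nonsingular)
qed simp_all

lemma aug_cols_B7_2_4:
  "aug_cols B7 {2, 4} =
    mat_of_cols 6 [vec_of_list [0, 1, 1, 0, 0, 1], vec_of_list [0, 0, 1, 0, 0, 0], vec_of_list [0, 0, 0, 0, 1, 0]]"
proof -
  have "cols B7 = [col B7 0]" using carrier_matD[OF B7_carrier] by (simp add: cols_def)
  moreover have "unit_vec 6 2 = (vec_of_list [0, 0, 1, 0, 0, 0] :: real vec)"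
    "unit_vec 6 4 = (vec_of_list [0, 0, 0, 0, 1, 0] :: real vec)"
    by (intro vec_of_list_6I; simp)+
  ultimately show ?thesis using carrier_matD[OF B7_carrier] by (simp add: aug_cols_def col_B7)
qed

lemma krylov_A7_aug_2_4:
  "map (\<lambda>(k, i). A7 ^\<^sub>m k *\<^sub>v col (aug_cols B7 {2, 4}) i) [(0, 0), (0, 1), (0, 2), (1, 0), (1, 1), (2, 0)] =
     [vec_of_list [0, 1, 1, 0, 0, 1], vec_of_list [0, 0, 1, 0, 0, 0],
      vec_of_list [0, 0, 0, 0, 1, 0], vec_of_list [1, -1, 3, 1, 0, 4],
      vec_of_list [1, 0, 3, 1, 0, 0], vec_of_list [2, 1, 9, 7, 0, 16]]"
proof -
  have "A7 ^\<^sub>m 0 *\<^sub>v v = v" if "v \<in> carrier_vec 6" for v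
    using that by (simp add: carrier_matD(1)[OF A7_carrier])
  with A7_carrier show ?thesis
    unfolding aug_cols_B7_2_4 by (simp add: eval_nat_numeral pow_mat_mult_vec_Suc vec_of_list_carrier A7_mult_vec
        del: pow_mat.simps)
qed

lemma krylov_A7_aug_2_4_nonsingular:
  fixes v :: "real vec"
  assumes v: "v \<in> carrier_vec 6"
    and ker: "mat_of_cols 6 [vec_of_list [0, 1, 1, 0, 0, 1], vec_of_list [0, 0, 1, 0, 0, 0],
      vec_of_list [0, 0, 0, 0, 1, 0], vec_of_list [1, -1, 3, 1, 0, 4],
      vec_of_list [1, 0, 3, 1, 0, 0], vec_of_list [2, 1, 9, 7, 0, 16]] *\<^sub>v v = 0\<^sub>v 6"
  shows "v = 0\<^sub>v 6"
proof -
  obtain x0 x1 x2 x3 x4 x5 where v_eq: "v = vec_of_list [x0, x1, x2, x3, x4, x5]"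
    using v by (rule vec_of_list_6_cases)
  from ker have "x0 = 0 \<and> x1 = 0 \<and> x2 = 0 \<and> x3 = 0 \<and> x4 = 0 \<and> x5 = 0"
    unfolding v_eq by (simp add: vec_6_eq_zero_iff mat_of_cols_def vec6_simps)
  then show ?thesis unfolding v_eq by (simp add: vec_of_list_eq_zero_iff)
qed

lemma controllable_A7_aug_2_4: "controllable A7 (aug_cols B7 {2, 4})"
proof (rule controllable_if_nonsingular_krylov[OF A7_carrier])
  show "aug_cols B7 {2, 4} \<in> carrier_mat 6 3" unfolding aug_cols_B7_2_4 by (rule carrier_matI) simp_all
  fix v :: "real vec"
  assume "v \<in> carrier_vec 6" "mat_of_cols 6 (map (\<lambda>(k, i). A7 ^\<^sub>m k *\<^sub>v col (aug_cols B7 {2, 4}) i)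
    [(0, 0), (0, 1), (0, 2), (1, 0), (1, 1), (2, 0)]) *\<^sub>v v = 0\<^sub>v 6"
  then show "v = 0\<^sub>v 6" unfolding krylov_A7_aug_2_4 by (rule krylov_A7_aug_2_4_nonsingular)
qed simp_all

lemma aug_cols_card_le_1_not_controllable:
  assumes J: "J \<subseteq> {0..<6}" and card_J: "card J \<le> 1"
  shows "\<not> controllable A7 (aug_cols B7 J)"
proof -
  obtain l w where mode: "uncontrollable_mode A7 B7 l w" and vanish: "\<forall>j\<in>J. w $ j = 0"
  proof (cases "4 \<in> J")
    case True
    then have "J = {4}" using card_J finite_subset[OF J] by (auto simp: card_le_Suc0_iff_eq)
    then show ?thesis using that[OF uncontrollable_modes_A7_B7(2)] by (simp add: vec_of_list_index)
  next
    case False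
    have "vec_of_list [0, 0, 0, 0, 1, 0] $ j = (0::real)" if "j \<in> J" for j
    proof -
      have "j < 6" "j \<noteq> 4" using that J False by auto
      then show ?thesis using less_6_cases[of j] by (auto simp: vec_of_list_index)
    qed
    then show ?thesis using that[OF uncontrollable_modes_A7_B7(1)] by blast
  qed
  have "aug_cols B7 J \<in> carrier_mat 6 (dim_col (aug_cols B7 J))"
    by (rule carrier_matI) (simp_all add: aug_cols_def carrier_matD[OF B7_carrier])
  then show ?thesis
    using uncontrollable_mode_aug_cols[OF A7_carrier B7_carrier mode J vanish] A7_carrier
    by (intro not_controllable_if_uncontrollable_mode) auto
qed

lemma rc_A7_B7: "rc A7 B7 = 3"
proof -
  let ?S = "{nnz dA + nnz dB | dA dB.
    dA \<in> carrier_mat 6 6 \<and> dB \<in> carrier_mat 6 1 \<and> controllable (A7 + dA) (B7 + (dB :: real mat))}"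
  have "3 \<in> ?S"
  proof -
    have "controllable (A7 + dA0) (B7 + 0\<^sub>m 6 1)" using controllable_A7_dA0 B7_carrier by simp
    moreover have "3 = nnz dA0 + nnz (0\<^sub>m 6 1 :: real mat)" using nnz_dA0 nnz_zero_mat by simp
    ultimately show ?thesis using dA0_carrier zero_carrier_mat by blast
  qed
  moreover have "3 \<le> x" if x: "x \<in> ?S" for x
  proof -
    obtain dA dB where x_eq: "x = nnz dA + nnz dB" and dA: "dA \<in> carrier_mat 6 6"
      and dB: "dB \<in> carrier_mat 6 1" and ctrb: "controllable (A7 + dA) (B7 + dB)"
      using x by blast
    show ?thesis
    proof (rule ccontr)
      assume "\<not> 3 \<le> x"
      then show False using sparse_perturbation_not_controllable[OF dA dB] ctrb x_eq by simp
    qed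
  qed
  ultimately show ?thesis
    unfolding rc_def carrier_matD[OF A7_carrier] carrier_matD[OF B7_carrier] by (rule cInf_eq_minimum)
qed

lemma Inf_card_aug_cols_A7_B7:
  "Inf {card J | J. J \<subseteq> {0..<6} \<and> controllable A7 (aug_cols B7 J)} = 2"
proof -
  let ?T = "{card J | J. J \<subseteq> {0..<6} \<and> controllable A7 (aug_cols B7 J)}"
  have "2 \<in> ?T"
  proof (rule CollectI, rule exI[of _ "{2, 4}"])
    show "2 = card {2, 4 :: nat} \<and> {2, 4} \<subseteq> {0..<6 :: nat} \<and> controllable A7 (aug_cols B7 {2, 4})"
      using controllable_A7_aug_2_4 by simp
  qed
  moreover have "2 \<le> x" if x: "x \<in> ?T" for x
  proof -
    obtain J where x_eq: "x = card J" and J: "J \<subseteq> {0..<6}"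
      and ctrb: "controllable A7 (aug_cols B7 J)"
      using x by blast
    show ?thesis
    proof (rule ccontr)
      assume "\<not> 2 \<le> x"
      then show False using aug_cols_card_le_1_not_controllable[OF J] ctrb x_eq by simp
    qed
  qed
  ultimately show ?thesis by (rule cInf_eq_minimum)
qed

theorem mainTheorem7:
  shows "rc A7 B7 = 3 \<and>
         Inf {card J | J. J \<subseteq> {0..<6} \<and> controllable A7 (aug_cols B7 J)} = 2"
  using rc_A7_B7 Inf_card_aug_cols_A7_B7 by (rule conjI)

end
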